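(* Let $G_1,\dots,G_n$ be torus grids, let $\Gamma=\{(f_{i,1},f_{i,2},\pi_i)\}_{i=1}^{n-1}$ be a gluing set for them, and let $G$ be the resulting composite grid. Let $T$ be a smooth transition system on $G$. Then there exists a set $\mathbb{T}=\{T_1,\dots,T_n\}$, with $T_i$ a smooth transition system of $G_i$, compatible with $\Gamma$, such that $T=\#\mathbb{T}$.
   Context: A torus grid is a $(k,l)$-regular grid on the torus: an $l$-regular graph ($l$ even) cellularly embedded on the torus whose geometric dual is $k$-regular. A face is cyclic if its boundary walk is a cycle. A gluing set for $G_1,\dots,G_n$ is a collection $\{(f_{i,1},f_{i,2},\pi_i)\}_{i=1}^{n-1}$ where $f_{i,1}$ is a cyclic face of $G_i$, $f_{i,2}$ is a cyclic face of $G_{i+1}$, $f_{i,2}\cap f_{i+1,1}=\emptyset$, and $\pi_i:\partial f_{i,1}\to\partial f_{i,2}$ is an isomorphism of cycle graphs. The composite grid $G$ is obtained by removing the interior of each face $f_{i,j}$ and gluing $\partial f_{i,1}$ to $\partial f_{i,2}$ according to $\pi_i$; it is embedded on the genus-$n$ surface. A transition at a vertex is a partition of its half-edges into pairs; it is smooth if it only pairs half-edges adjacent in the cyclic rotation; a smooth transition system is a choice of smooth transition at each vertex. For a vertex $v$ on a face $f$, a transition at $v$ is an $f$-transition if it pairs the two half-edges of $\partial f$ at $v$ with each other. Smooth transition systems $T_i$ of $G_i$ and $T_{i+1}$ of $G_{i+1}$ are compatible via $(f_{i,1},f_{i,2},\pi_i)$ if for every $v\in\partial f_{i,1}$, $T_i$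 is an $f_{i,1}$-transition at $v$ if and only if $T_{i+1}$ is not an $f_{i,2}$-transition at $\pi_i(v)$; $\mathbb{T}$ is compatible with $\Gamma$ if this holds for each $1\le i<n$. For compatible transitions $t_1$ at $v_1\in\partial f_{i,1}$ and $t_2$ at $v_2=\pi_i(v_1)$, with $v$ the glued vertex of $G$, the connected sum $t_1\# t_2$ at $v$ is defined as follows: every pair of $t_1$ or $t_2$ containing no half-edge of the glued face boundary stays a pair; exactly one of $t_1,t_2$ pairs the two boundary half-edges $h,h'$ (of its face) at its vertex with non-boundary half-edges $s,s'$ respectively, and in $t_1\#t_2$ one pairs $s$ and $s'$ with the half-edges of the glued cycle whose preimages are $h$ and $h'$ respectively. The connected sum $\#\mathbb{T}$ of a set $\mathbb{T}$ compatible with $\Gamma$ is the smooth transition system of $G$ which at each unglued vertex uses the transition of the corresponding $T_i$, and at each vertex formed by gluing $f_{i,1}$ to $f_{i,2}$ uses the connected sum of the transitions of $T_i$ and $T_{i+1}$ at its preimages. *)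

theory Defs
  imports Main
begin

text \<open>A cellularly embedded (multi)graph on an orientable surface is encoded as a
combinatorial map: a finite set of darts (half-edges), a fixed-point-free involution
alph (the two half-edges of an edge) and a permutation rot (the cyclic rotation of
the half-edges around each vertex).\<close>

record 'd cmap =
  darts :: "'d set"
  alph  :: "'d \<Rightarrow> 'd"
  rot   :: "'d \<Rightarrow> 'd"

definition cmap_wf :: "'d cmap \<Rightarrow> bool" where
  "cmap_wf M \<longleftrightarrow> finite (darts M) \<and> darts M \<noteq> {} \<and>
     bij_betw (rot M) (darts M) (darts M) \<and>
     (\<forall>d\<in>darts M. alph M d \<in> darts M \<and> alph M d \<noteq> d \<and> alph M (alph M d) = d)"

definition vert :: "'d cmap \<Rightarrow> 'd \<Rightarrow> 'd set" where
  "vert M d = {(rot M ^^ k) d | k. True}"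

definition verts :: "'d cmap \<Rightarrow> 'd set set" where
  "verts M = vert M ` darts M"

definition edges :: "'d cmap \<Rightarrow> 'd set set" where
  "edges M = (\<lambda>d. {d, alph M d}) ` darts M"

definition face_perm :: "'d cmap \<Rightarrow> 'd \<Rightarrow> 'd" where
  "face_perm M = rot M \<circ> alph M"

definition faces :: "'d cmap \<Rightarrow> 'd set set" where
  "faces M = (\<lambda>d. {(face_perm M ^^ k) d | k. True}) ` darts M"

definition map_steps :: "'d cmap \<Rightarrow> ('d \<times> 'd) set" where
  "map_steps M = {(x, y). x \<in> darts M \<and> (y = rot M x \<or> y = alph M x)}"

definition map_connected :: "'d cmap \<Rightarrow> bool" where
  "map_connected M \<longleftrightarrow> (\<forall>x\<in>darts M. \<forall>y\<in>darts M. (x, y) \<in> (map_steps M)\<^sup>*)"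

text \<open>(k,l)-regular grid on the torus: connected map of Euler characteristic 0
(i.e. a cellular embedding in the torus), l-regular with l even, all faces of length k
(dual is k-regular).\<close>

definition torus_grid :: "'d cmap \<Rightarrow> nat \<Rightarrow> nat \<Rightarrow> bool" where
  "torus_grid M k l \<longleftrightarrow> cmap_wf M \<and> map_connected M \<and>
     int (card (verts M)) - int (card (edges M)) + int (card (faces M)) = 0 \<and>
     even l \<and> (\<forall>v\<in>verts M. card v = l) \<and> (\<forall>f\<in>faces M. card f = k)"

definition bverts :: "'d cmap \<Rightarrow> 'd set \<Rightarrow> 'd set set" where
  "bverts M f = vert M ` f"

text \<open>The half-edges of the boundary of a face f (both half-edges of every boundary edge).\<close>
definition bdarts :: "'d cmap \<Rightarrow> 'd set \<Rightarrow> 'd set" where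
  "bdarts M f = f \<union> alph M ` f"

text \<open>Cyclic face: its boundary walk visits no vertex twice, i.e. is a cycle.\<close>
definition cyclic_face :: "'d cmap \<Rightarrow> 'd set \<Rightarrow> bool" where
  "cyclic_face M f \<longleftrightarrow> f \<in> faces M \<and> inj_on (vert M) f"

text \<open>Isomorphism of the boundary cycles, given on vertices: a bijection mapping
every boundary edge to a boundary edge.\<close>
definition cycle_iso :: "'d cmap \<Rightarrow> 'd set \<Rightarrow> 'd cmap \<Rightarrow> 'd set \<Rightarrow> ('d set \<Rightarrow> 'd set) \<Rightarrow> bool" where
  "cycle_iso M1 f1 M2 f2 g \<longleftrightarrow> bij_betw g (bverts M1 f1) (bverts M2 f2) \<and>
     (\<forall>d\<in>f1. \<exists>d'\<in>f2. {g (vert M1 d), g (vert M1 (alph M1 d))} =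
                       {vert M2 d', vert M2 (alph M2 d')})"

text \<open>Maps are indexed 0..n-1; gluing i (for i+1 < n) glues face F1 i of M i to face
F2 i of M (i+1) via gl i.\<close>
definition gluing_set :: "(nat \<Rightarrow> 'd cmap) \<Rightarrow> nat \<Rightarrow> (nat \<Rightarrow> 'd set) \<Rightarrow> (nat \<Rightarrow> 'd set)
    \<Rightarrow> (nat \<Rightarrow> 'd set \<Rightarrow> 'd set) \<Rightarrow> bool" where
  "gluing_set M n F1 F2 gl \<longleftrightarrow> (\<forall>i. Suc i < n \<longrightarrow>
     cyclic_face (M i) (F1 i) \<and> cyclic_face (M (Suc i)) (F2 i) \<and>
     cycle_iso (M i) (F1 i) (M (Suc i)) (F2 i) (gl i) \<and>
     (Suc (Suc i) < n \<longrightarrow> bverts (M (Suc i)) (F2 i) \<inter> bverts (M (Suc i)) (F1 (Suc i)) = {}))"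

text \<open>Half-edge (i,h) of the boundary of F1 i is identified with half-edge (i+1,k) of the
boundary of F2 i when they lie on corresponding edges at corresponding vertices.\<close>
definition glued :: "(nat \<Rightarrow> 'd cmap) \<Rightarrow> nat \<Rightarrow> (nat \<Rightarrow> 'd set) \<Rightarrow> (nat \<Rightarrow> 'd set)
    \<Rightarrow> (nat \<Rightarrow> 'd set \<Rightarrow> 'd set) \<Rightarrow> nat \<times> 'd \<Rightarrow> nat \<times> 'd \<Rightarrow> bool" where
  "glued M n F1 F2 gl = (\<lambda>(i, h) (j, k). j = Suc i \<and> j < n \<and>
     h \<in> bdarts (M i) (F1 i) \<and> k \<in> bdarts (M j) (F2 i) \<and>
     gl i (vert (M i) h) = vert (M j) k \<and>
     gl i (vert (M i) (alph (M i) h)) = vert (M j) (alph (M j) k))"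

text \<open>The half-edge of the composite grid containing a half-edge of some M i.\<close>
definition hcls :: "(nat \<Rightarrow> 'd cmap) \<Rightarrow> nat \<Rightarrow> (nat \<Rightarrow> 'd set) \<Rightarrow> (nat \<Rightarrow> 'd set)
    \<Rightarrow> (nat \<Rightarrow> 'd set \<Rightarrow> 'd set) \<Rightarrow> nat \<times> 'd \<Rightarrow> (nat \<times> 'd) set" where
  "hcls M n F1 F2 gl x = {x} \<union> {y. glued M n F1 F2 gl x y \<or> glued M n F1 F2 gl y x}"

definition gbd :: "(nat \<Rightarrow> 'd cmap) \<Rightarrow> nat \<Rightarrow> (nat \<Rightarrow> 'd set) \<Rightarrow> (nat \<Rightarrow> 'd set)
    \<Rightarrow> nat \<times> 'd \<Rightarrow> bool" where
  "gbd M n F1 F2 = (\<lambda>(i, d). i < n \<and>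
     ((Suc i < n \<and> d \<in> bdarts (M i) (F1 i)) \<or> (0 < i \<and> d \<in> bdarts (M i) (F2 (i - 1)))))"

definition composite_halfedges :: "(nat \<Rightarrow> 'd cmap) \<Rightarrow> nat \<Rightarrow> (nat \<Rightarrow> 'd set) \<Rightarrow> (nat \<Rightarrow> 'd set)
    \<Rightarrow> (nat \<Rightarrow> 'd set \<Rightarrow> 'd set) \<Rightarrow> (nat \<times> 'd) set set" where
  "composite_halfedges M n F1 F2 gl =
     hcls M n F1 F2 gl ` {(i, d). i < n \<and> d \<in> darts (M i)}"

text \<open>Adjacency of half-edges in the cyclic rotation of the composite grid: the rotation
at a glued vertex is obtained by removing the corner of the deleted face on both sides
and splicing the two rotations along the identified boundary half-edges.\<close>
definition composite_adj :: "(nat \<Rightarrow> 'd cmap) \<Rightarrow> nat \<Rightarrow> (nat \<Rightarrow> 'd set) \<Rightarrow> (nat \<Rightarrow> 'd set)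
    \<Rightarrow> (nat \<Rightarrow> 'd set \<Rightarrow> 'd set) \<Rightarrow> (nat \<times> 'd) set \<Rightarrow> (nat \<times> 'd) set \<Rightarrow> bool" where
  "composite_adj M n F1 F2 gl a b \<longleftrightarrow> a \<noteq> b \<and>
     (\<exists>i<n. \<exists>d\<in>darts (M i).
        \<not> (gbd M n F1 F2 (i, d) \<and> gbd M n F1 F2 (i, rot (M i) d)) \<and>
        {a, b} = {hcls M n F1 F2 gl (i, d), hcls M n F1 F2 gl (i, rot (M i) d)})"

text \<open>A smooth transition system on half-edge set H with rotation adjacency adj:
a partition of H into pairs of rotation-adjacent half-edges (such pairs lie at a
common vertex, so this is a choice of smooth transition at every vertex).\<close>
definition smooth_ts_gen :: "'h set \<Rightarrow> ('h \<Rightarrow> 'h \<Rightarrow> bool) \<Rightarrow> 'h set set \<Rightarrow> bool" where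
  "smooth_ts_gen H adj T \<longleftrightarrow>
     (\<forall>p\<in>T. \<exists>a\<in>H. \<exists>b\<in>H. adj a b \<and> p = {a, b}) \<and>
     (\<forall>a\<in>H. \<exists>!p. p \<in> T \<and> a \<in> p)"

definition rot_adj :: "'d cmap \<Rightarrow> 'd \<Rightarrow> 'd \<Rightarrow> bool" where
  "rot_adj M a b \<longleftrightarrow> a \<noteq> b \<and> (b = rot M a \<or> a = rot M b)"

definition smooth_ts :: "'d cmap \<Rightarrow> 'd set set \<Rightarrow> bool" where
  "smooth_ts M T \<longleftrightarrow> smooth_ts_gen (darts M) (rot_adj M) T"

text \<open>T is an f-transition at vertex v: it pairs the two half-edges of the boundary of f at v.\<close>
definition ftrans :: "'d cmap \<Rightarrow> 'd set \<Rightarrow> 'd set set \<Rightarrow> 'd set \<Rightarrow> bool" where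
  "ftrans M f T v \<longleftrightarrow> bdarts M f \<inter> v \<in> T"

definition compatible :: "(nat \<Rightarrow> 'd cmap) \<Rightarrow> nat \<Rightarrow> (nat \<Rightarrow> 'd set) \<Rightarrow> (nat \<Rightarrow> 'd set)
    \<Rightarrow> (nat \<Rightarrow> 'd set \<Rightarrow> 'd set) \<Rightarrow> (nat \<Rightarrow> 'd set set) \<Rightarrow> bool" where
  "compatible M n F1 F2 gl TT \<longleftrightarrow> (\<forall>i. Suc i < n \<longrightarrow>
     (\<forall>v\<in>bverts (M i) (F1 i).
        ftrans (M i) (F1 i) (TT i) v \<longleftrightarrow> \<not> ftrans (M (Suc i)) (F2 i) (TT (Suc i)) (gl i v)))"

text \<open>Connected sum: pairs containing no glued-boundary half-edge are kept; a pair {h,s}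
with h a glued-boundary half-edge and s not becomes {s, glued half-edge of h};
pairs of two boundary half-edges (f-transitions) are dropped.\<close>
definition csum :: "(nat \<Rightarrow> 'd cmap) \<Rightarrow> nat \<Rightarrow> (nat \<Rightarrow> 'd set) \<Rightarrow> (nat \<Rightarrow> 'd set)
    \<Rightarrow> (nat \<Rightarrow> 'd set \<Rightarrow> 'd set) \<Rightarrow> (nat \<Rightarrow> 'd set set) \<Rightarrow> (nat \<times> 'd) set set set" where
  "csum M n F1 F2 gl TT =
     {hcls M n F1 F2 gl ` Pair i ` p | i p. i < n \<and> p \<in> TT i \<and> (\<forall>x\<in>p. \<not> gbd M n F1 F2 (i, x))}
     \<union> {{hcls M n F1 F2 gl (i, s), hcls M n F1 F2 gl (i, h)} | i h s.
          i < n \<and> {h, s} \<in> TT i \<and> gbd M n F1 F2 (i, h) \<and> \<not> gbd M n F1 F2 (i, s)}"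

end

theory Submission
  imports Defs
begin

text \<open>
  A half-edge of the composite grid off the glued boundaries is a half-edge of a single \<open>G\<^sub>i\<close>,
  and a glued one is the class of exactly two half-edges, of \<open>G\<^sub>i\<close> and of \<open>G\<^sub>i\<^sub>+\<^sub>1\<close>. Hence every
  pair of \<open>T\<close> is a rotation step inside one \<open>G\<^sub>i\<close>, and \<open>T\<^sub>i\<close> keeps these pairs. This determines
  \<open>T\<^sub>i\<close> except at the corners \<open>\<beta>, rot \<beta>\<close> of the glued faces, the only glued-boundary half-edges
  at their vertex (the two glued faces of \<open>G\<^sub>i\<close> share no vertex). The other half-edges at that
  vertex are paired by \<open>T\<close> along the rotation, and as the degree is even, \<open>T\<close> pairs \<open>\<beta>\<close> inside
  \<open>G\<^sub>i\<close> iff it so pairs \<open>rot \<beta>\<close>. Where it pairs neither, \<open>T\<^sub>i\<close> pairs them with each other, an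
  \<open>f\<close>-transition. Since \<open>T\<close> pairs a glued half-edge into exactly one of its two grids, the
  resulting \<open>T\<^sub>i\<close> are compatible, and \<open>T = #\<^bold>T\<close> by construction.
\<close>

lemma alternating_iff:
  fixes P :: "nat \<Rightarrow> bool"
  assumes alt: "\<And>j. 0 < j \<Longrightarrow> j < m \<Longrightarrow> P j \<longleftrightarrow> \<not> P (j - 1)"
  shows "j < m \<Longrightarrow> P j \<longleftrightarrow> (even j \<longleftrightarrow> P 0)"
proof (induction j)
  case (Suc j)
  then show ?case using alt[of "Suc j"] by auto
qed simp

definition iter_orbit :: "('d \<Rightarrow> 'd) \<Rightarrow> 'd \<Rightarrow> 'd set" where
  "iter_orbit p x = {(p ^^ k) x | k. True}"

lemma funpow_in_iter_orbit: "(p ^^ j) x \<in> iter_orbit p x"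
  unfolding iter_orbit_def by auto

locale finite_injection =
  fixes D :: "'d set" and p :: "'d \<Rightarrow> 'd"
  assumes finite: "finite D" and inj: "inj_on p D" and closed: "\<And>x. x \<in> D \<Longrightarrow> p x \<in> D"
begin

lemma funpow_closed: "x \<in> D \<Longrightarrow> (p ^^ j) x \<in> D"
  by (induction j) (auto intro: closed)

lemma funpow_cancel: "x \<in> D \<Longrightarrow> y \<in> D \<Longrightarrow> (p ^^ j) x = (p ^^ j) y \<Longrightarrow> x = y"
proof (induction j)
  case (Suc j)
  then show ?case using funpow_closed inj by (auto dest: inj_onD)
qed simp

lemma funpow_diff_fixes:
  assumes "x \<in> D" "a \<le> b" "(p ^^ a) x = (p ^^ b) x"
  shows "(p ^^ (b - a)) x = x"
proof -
  have "(p ^^ a) ((p ^^ (b - a)) x) = (p ^^ a) x"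
    using assms by (metis funpow_add le_add_diff_inverse o_apply)
  then show ?thesis using funpow_cancel funpow_closed assms(1) by blast
qed

lemma iter_orbit_subset: "x \<in> D \<Longrightarrow> iter_orbit p x \<subseteq> D"
  unfolding iter_orbit_def using funpow_closed by auto

lemma return_exists: assumes x: "x \<in> D" shows "\<exists>m>0. (p ^^ m) x = x"
proof -
  have "\<not> inj_on (\<lambda>j. (p ^^ j) x) {..card D}"
  proof
    assume "inj_on (\<lambda>j. (p ^^ j) x) {..card D}"
    moreover have "(\<lambda>j. (p ^^ j) x) ` {..card D} \<subseteq> D" using funpow_closed x by auto
    ultimately have "card {..card D} \<le> card D" using card_inj_on_le finite by blast
    then show False by simp
  qed
  then obtain a b where "a < b" "(p ^^ a) x = (p ^^ b) x"
    unfolding inj_on_def by (metis linorder_neqE_nat)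
  then show ?thesis using funpow_diff_fixes[OF x] by (intro exI[of _ "b - a"]) auto
qed

definition period :: "'d \<Rightarrow> nat" where
  "period x = (LEAST m. 0 < m \<and> (p ^^ m) x = x)"

lemma period_pos: "x \<in> D \<Longrightarrow> 0 < period x"
  and funpow_period: "x \<in> D \<Longrightarrow> (p ^^ period x) x = x"
  using LeastI_ex[OF return_exists] unfolding period_def by auto

lemma funpow_below_period: "0 < m \<Longrightarrow> m < period x \<Longrightarrow> (p ^^ m) x \<noteq> x"
  unfolding period_def using not_less_Least by blast

lemma funpow_mod_period: assumes x: "x \<in> D" shows "(p ^^ j) x = (p ^^ (j mod period x)) x"
proof -
  have "(p ^^ (q * period x)) x = x" for q
    by (induction q) (simp_all add: funpow_add funpow_period[OF x])
  moreover have "j = j mod period x + (j div period x) * period x" by (metis mod_div_mult_eq)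
  ultimately show ?thesis by (metis funpow_add o_apply)
qed

lemma inj_on_funpow_period: assumes x: "x \<in> D" shows "inj_on (\<lambda>j. (p ^^ j) x) {..<period x}"
proof -
  have False if "a < b" "b < period x" "(p ^^ a) x = (p ^^ b) x" for a b
    using funpow_diff_fixes[OF x, of a b] funpow_below_period[of "b - a" x] that by simp
  then show ?thesis unfolding inj_on_def by (metis lessThan_iff linorder_neqE_nat)
qed

lemma iter_orbit_eq: assumes x: "x \<in> D" shows "iter_orbit p x = (\<lambda>j. (p ^^ j) x) ` {..<period x}"
  unfolding iter_orbit_def using funpow_mod_period[OF x] period_pos[OF x]
  by (auto intro!: image_eqI[of _ _ "_ mod period x"])

lemma card_iter_orbit: "x \<in> D \<Longrightarrow> card (iter_orbit p x) = period x"
  using iter_orbit_eq inj_on_funpow_period card_image by (metis card_lessThan)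

lemma iter_orbit_eq_if_mem:
  assumes x: "x \<in> D" and y: "y \<in> iter_orbit p x"
  shows "iter_orbit p y = iter_orbit p x"
proof -
  obtain j where j: "y = (p ^^ j) x" "j < period x"
    using y iter_orbit_eq[OF x] by auto
  have "(p ^^ (period x - j)) y = x"
    using j funpow_period[OF x] by (simp add: funpow_add[symmetric, THEN fun_cong, simplified])
  then have x_in: "x \<in> iter_orbit p y" using funpow_in_iter_orbit by metis
  have sub: "iter_orbit p b \<subseteq> iter_orbit p a" if "b \<in> iter_orbit p a" for a b
    using that unfolding iter_orbit_def
    by (auto simp: funpow_add[symmetric, THEN fun_cong, simplified] intro: exI[of _ "_ + _"])
  show ?thesis using sub[OF y] sub[OF x_in] by blast
qed

end

section \<open>Torus grids\<close>

lemma funpow_rot_in_vert: "(rot M ^^ j) a \<in> vert M a"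
  unfolding vert_def by blast

lemma self_in_vert: "a \<in> vert M a"
  using funpow_rot_in_vert[of 0 M] by simp

locale torus_map =
  fixes M :: "'d cmap" and k l :: nat
  assumes torus_grid: "torus_grid M k l"
begin

lemma cmap_wf: "cmap_wf M" using torus_grid unfolding torus_grid_def by auto
lemma finite_darts: "finite (darts M)" using cmap_wf unfolding cmap_wf_def by auto
lemma darts_nonempty: "darts M \<noteq> {}" using cmap_wf unfolding cmap_wf_def by auto
lemma rot_bij: "bij_betw (rot M) (darts M) (darts M)" using cmap_wf unfolding cmap_wf_def by auto
lemma alph_in: "d \<in> darts M \<Longrightarrow> alph M d \<in> darts M" using cmap_wf unfolding cmap_wf_def by auto
lemma alph_neq: "d \<in> darts M \<Longrightarrow> alph M d \<noteq> d" using cmap_wf unfolding cmap_wf_def by auto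
lemma alph_alph [simp]: "d \<in> darts M \<Longrightarrow> alph M (alph M d) = d" using cmap_wf unfolding cmap_wf_def by auto
lemma rot_in: "d \<in> darts M \<Longrightarrow> rot M d \<in> darts M" using bij_betwE[OF rot_bij] by blast
lemma rot_inj: "inj_on (rot M) (darts M)" using rot_bij unfolding bij_betw_def by blast

lemma rot_cancel: "x \<in> darts M \<Longrightarrow> y \<in> darts M \<Longrightarrow> rot M x = rot M y \<Longrightarrow> x = y"
  using inj_onD[OF rot_inj] by blast

sublocale rot: finite_injection "darts M" "rot M"
  by unfold_locales (simp_all add: finite_darts rot_inj rot_in)

sublocale face: finite_injection "darts M" "face_perm M"
proof
  show "inj_on (face_perm M) (darts M)"
    by (rule inj_onI) (metis alph_alph alph_in comp_apply face_perm_def rot_cancel)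
qed (simp_all add: finite_darts face_perm_def rot_in alph_in)

lemma vert_eq_iter_orbit: "vert M d = iter_orbit (rot M) d"
  unfolding vert_def iter_orbit_def by simp

lemma rot_period: "a \<in> darts M \<Longrightarrow> rot.period a = l"
  using torus_grid rot.card_iter_orbit vert_eq_iter_orbit
  unfolding torus_grid_def verts_def by (metis image_eqI)

lemma even_l: "even l" using torus_grid unfolding torus_grid_def by auto

lemma two_le_l: "2 \<le> l"
proof -
  obtain a where "a \<in> darts M" using darts_nonempty by blast
  then have "0 < l" using rot.period_pos rot_period by metis
  then show ?thesis using even_l by (cases "l = 1") auto
qed

lemma rot_neq: "a \<in> darts M \<Longrightarrow> rot M a \<noteq> a"
  using rot.funpow_below_period[of 1 a] rot_period two_le_l by auto

lemma vert_eq_if_mem: "a \<in> darts M \<Longrightarrow> x \<in> vert M a \<Longrightarrow> vert M x = vert M a"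
  using rot.iter_orbit_eq_if_mem vert_eq_iter_orbit by metis

lemma vert_rot: "a \<in> darts M \<Longrightarrow> vert M (rot M a) = vert M a"
  using vert_eq_if_mem funpow_rot_in_vert[of 1 M a] by simp

lemma vert_alph: "d \<in> darts M \<Longrightarrow> vert M (alph M d) = vert M (face_perm M d)"
  using vert_rot alph_in unfolding face_perm_def by simp

lemma funpow_rot_l: "a \<in> darts M \<Longrightarrow> (rot M ^^ l) a = a"
  using rot.funpow_period rot_period by metis

lemma inj_on_funpow_rot: "a \<in> darts M \<Longrightarrow> inj_on (\<lambda>j. (rot M ^^ j) a) {..<l}"
  using rot.inj_on_funpow_period rot_period by metis

lemma card_darts_eq_twice_edges: "card (darts M) = 2 * card (edges M)"
proof -
  have union: "\<Union> (edges M) = darts M" unfolding edges_def using alph_in by auto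
  have "disjnt A B" if "A \<in> edges M" "B \<in> edges M" "A \<noteq> B" for A B
    using that unfolding edges_def disjnt_def by (auto simp: insert_commute) (metis alph_alph)+
  then have "card (\<Union> (edges M)) = sum card (edges M)"
    by (intro card_Union_disjoint) (auto simp: pairwise_def edges_def)
  also have "\<dots> = sum (\<lambda>_. 2) (edges M)"
    by (intro sum.cong) (auto simp: edges_def dest: alph_neq)
  finally show ?thesis using union by simp
qed

lemma card_darts_le_faces: "card (darts M) \<le> k * card (faces M)"
proof -
  have "\<Union> (faces M) = darts M"
    using face.funpow_closed unfolding faces_def by (force intro: exI[of _ 0])
  moreover have "card (\<Union> (faces M)) \<le> sum card (faces M)" by (rule card_Union_le_sum_card)
  moreover have "sum card (faces M) = k * card (faces M)"
    using torus_grid unfolding torus_grid_def by simp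
  ultimately show ?thesis by simp
qed

text \<open>Faces of length at most 2 would give \<open>E \<le> F\<close>, contradicting \<open>V - E + F = 0\<close> with \<open>V \<ge> 1\<close>.\<close>
lemma three_le_k: "3 \<le> k"
proof (rule ccontr)
  assume "\<not> 3 \<le> k"
  then have "card (darts M) \<le> 2 * card (faces M)"
    using card_darts_le_faces mult_le_mono1[of k 2 "card (faces M)"] by linarith
  moreover have "card (verts M) \<ge> 1"
    using darts_nonempty finite_darts unfolding verts_def by (simp add: Suc_leI card_gt_0_iff)
  moreover have "int (card (verts M)) - int (card (edges M)) + int (card (faces M)) = 0"
    using torus_grid unfolding torus_grid_def by auto
  ultimately show False using card_darts_eq_twice_edges by linarith
qed

definition face_pred :: "'d \<Rightarrow> 'd" where
  "face_pred e = (face_perm M ^^ (k - 1)) e"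

context
  fixes f assumes cyclic: "cyclic_face M f"
begin

lemma face_is_orbit: "\<exists>d\<in>darts M. f = iter_orbit (face_perm M) d"
  using cyclic unfolding cyclic_face_def faces_def iter_orbit_def by auto

lemma face_subset: "f \<subseteq> darts M"
  using face_is_orbit face.iter_orbit_subset by blast

lemma face_eq_orbit: "e \<in> f \<Longrightarrow> iter_orbit (face_perm M) e = f"
  using face_is_orbit face.iter_orbit_eq_if_mem by blast

lemma face_period: "e \<in> f \<Longrightarrow> face.period e = k"
  using torus_grid cyclic face_eq_orbit face.card_iter_orbit face_subset
  unfolding torus_grid_def cyclic_face_def by (metis subsetD)

lemma funpow_face_perm_in: "e \<in> f \<Longrightarrow> (face_perm M ^^ j) e \<in> f"
  using face_eq_orbit funpow_in_iter_orbit by metis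

lemma face_perm_in: "e \<in> f \<Longrightarrow> face_perm M e \<in> f"
  using funpow_face_perm_in[of e 1] by simp

lemma face_pred_in: "e \<in> f \<Longrightarrow> face_pred e \<in> f"
  unfolding face_pred_def using funpow_face_perm_in by blast

lemma face_perm_face_pred: "e \<in> f \<Longrightarrow> face_perm M (face_pred e) = e"
proof -
  assume e: "e \<in> f"
  have "face_perm M (face_pred e) = (face_perm M ^^ Suc (k - 1)) e"
    unfolding face_pred_def by simp
  also have "Suc (k - 1) = face.period e" using face_period[OF e] three_le_k by simp
  finally show ?thesis using face.funpow_period face_subset e by auto
qed

lemma rot_alph_face_pred: "e \<in> f \<Longrightarrow> rot M (alph M (face_pred e)) = e"
  using face_perm_face_pred unfolding face_perm_def by simp

lemma face_perm_neq_face_pred: "e \<in> f \<Longrightarrow> face_perm M e \<noteq> face_pred e"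
proof
  assume e: "e \<in> f" and eq: "face_perm M e = face_pred e"
  have inj: "inj_on (\<lambda>j. (face_perm M ^^ j) e) {..<k}"
    using face.inj_on_funpow_period face_period e face_subset by (metis subsetD)
  have "(face_perm M ^^ 1) e = (face_perm M ^^ (k - 1)) e"
    using eq unfolding face_pred_def by simp
  then have "(1::nat) = k - 1" using inj_onD[OF inj] three_le_k by simp
  then show False using three_le_k by simp
qed

lemma vert_alph_face_pred: "e \<in> f \<Longrightarrow> vert M (alph M (face_pred e)) = vert M e"
  using vert_alph face_perm_face_pred face_pred_in face_subset by (metis subsetD)

lemma bdarts_inter_vert: "e \<in> f \<Longrightarrow> bdarts M f \<inter> vert M e = {alph M (face_pred e), e}"
proof
  assume e: "e \<in> f"
  have inj: "inj_on (vert M) f" using cyclic unfolding cyclic_face_def by simp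
  show "bdarts M f \<inter> vert M e \<subseteq> {alph M (face_pred e), e}"
  proof
    fix x assume x: "x \<in> bdarts M f \<inter> vert M e"
    then have vx: "vert M x = vert M e" using vert_eq_if_mem face_subset e by blast
    show "x \<in> {alph M (face_pred e), e}"
    proof (cases "x \<in> f")
      case True then show ?thesis using vx inj e by (auto dest: inj_onD)
    next
      case False
      then obtain d where d: "d \<in> f" "x = alph M d" using x unfolding bdarts_def by auto
      have "vert M (face_perm M d) = vert M e" using vx d vert_alph face_subset by blast
      then have "face_perm M d = face_perm M (face_pred e)"
        using inj face_perm_in face_perm_face_pred d e by (auto dest: inj_onD)
      then have "d = face_pred e"
        using face.inj d face_pred_in e face_subset by (auto dest: inj_onD)
      then show ?thesis using d by simp
    qed
  qed
  show "{alph M (face_pred e), e} \<subseteq> bdarts M f \<inter> vert M e"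
    using e face_pred_in self_in_vert[of e] self_in_vert[of "alph M (face_pred e)"]
      vert_alph_face_pred[OF e] unfolding bdarts_def by auto
qed

lemma bdarts_cases: "x \<in> bdarts M f \<Longrightarrow> \<exists>e\<in>f. x = alph M (face_pred e) \<or> x = e"
proof (cases "x \<in> f")
  case False
  assume "x \<in> bdarts M f"
  then obtain d where d: "d \<in> f" "x = alph M d" using False unfolding bdarts_def by auto
  have "face_perm M (face_pred (face_perm M d)) = face_perm M d"
    using face_perm_face_pred face_perm_in d by blast
  then have "face_pred (face_perm M d) = d"
    using inj_onD[OF face.inj] face_pred_in face_perm_in d face_subset by blast
  then show ?thesis using d face_perm_in by metis
qed blast

lemma bdarts_alph: "x \<in> bdarts M f \<Longrightarrow> alph M x \<in> bdarts M f"
  unfolding bdarts_def using face_subset by auto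

lemma vert_in_bverts: "x \<in> bdarts M f \<Longrightarrow> vert M x \<in> bverts M f"
  using bdarts_cases vert_alph_face_pred unfolding bverts_def by fastforce

lemma vert_alph_neq_vert_face_pred: "e \<in> f \<Longrightarrow> vert M (alph M e) \<noteq> vert M (face_pred e)"
proof
  assume e: "e \<in> f" and eq: "vert M (alph M e) = vert M (face_pred e)"
  have "vert M (face_perm M e) = vert M (face_pred e)"
    using eq vert_alph e face_subset by auto
  then have "face_perm M e = face_pred e"
    using cyclic face_perm_in face_pred_in e unfolding cyclic_face_def by (auto dest: inj_onD)
  then show False using face_perm_neq_face_pred e by simp
qed

lemma bdarts_subset: "bdarts M f \<subseteq> darts M"
  using face_subset alph_in unfolding bdarts_def by auto

lemma bdarts_eqI:
  assumes x: "x \<in> bdarts M f" and y: "y \<in> bdarts M f" and v: "vert M x = vert M y"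
    and va: "vert M (alph M x) = vert M (alph M y)"
  shows "x = y"
proof (rule ccontr)
  assume "x \<noteq> y"
  obtain e where e: "e \<in> f" "x = alph M (face_pred e) \<or> x = e" using bdarts_cases x by blast
  have "x \<in> vert M e" using bdarts_inter_vert[OF e(1)] e(2) by auto
  then have "y \<in> vert M e" using v self_in_vert vert_eq_if_mem face_subset e(1) by (metis subsetD)
  then have "y = alph M (face_pred e) \<or> y = e" using bdarts_inter_vert[OF e(1)] y by auto
  moreover have "face_pred e \<in> darts M" using face_pred_in e(1) face_subset by blast
  ultimately have "{vert M (alph M x), vert M (alph M y)} = {vert M (face_pred e), vert M (alph M e)}"
    using e \<open>x \<noteq> y\<close> by auto
  then show False using va vert_alph_neq_vert_face_pred[OF e(1)] by (auto simp: doubleton_eq_iff)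
qed

end

end

section \<open>Transition systems on the composite grid\<close>

lemma rot_adj_sym: "rot_adj M a b \<longleftrightarrow> rot_adj M b a"
  unfolding rot_adj_def by auto

locale composite_ts =
  fixes M :: "nat \<Rightarrow> 'd cmap" and n :: nat
    and F1 F2 :: "nat \<Rightarrow> 'd set" and gl :: "nat \<Rightarrow> 'd set \<Rightarrow> 'd set"
    and T :: "(nat \<times> 'd) set set set"
  assumes grids: "\<forall>i<n. \<exists>k l. torus_grid (M i) k l"
    and gluing: "gluing_set M n F1 F2 gl"
    and smooth: "smooth_ts_gen (composite_halfedges M n F1 F2 gl) (composite_adj M n F1 F2 gl) T"
begin

abbreviation C where "C i a \<equiv> hcls M n F1 F2 gl (i, a)"
abbreviation G where "G i a \<equiv> gbd M n F1 F2 (i, a)"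
abbreviation H where "H \<equiv> composite_halfedges M n F1 F2 gl"
abbreviation D where "D i \<equiv> darts (M i)"
abbreviation R where "R i \<equiv> rot (M i)"
abbreviation V where "V i \<equiv> vert (M i)"
abbreviation glued_to where "glued_to x y \<equiv> glued M n F1 F2 gl x y"

definition face_len :: "nat \<Rightarrow> nat" where
  "face_len i = (SOME k. \<exists>l. torus_grid (M i) k l)"

definition degree :: "nat \<Rightarrow> nat" where
  "degree i = (SOME l. torus_grid (M i) (face_len i) l)"

lemma torus_map: "i < n \<Longrightarrow> torus_map (M i) (face_len i) (degree i)"
proof -
  assume "i < n"
  then have "\<exists>l. torus_grid (M i) (face_len i) l"
    using grids unfolding face_len_def by (metis (mono_tags) someI_ex)
  then show ?thesis unfolding degree_def torus_map_def by (rule someI_ex)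
qed

abbreviation pred where "pred i e \<equiv> torus_map.face_pred (M i) (face_len i) e"

lemma gluing_at: "Suc i < n \<Longrightarrow> cyclic_face (M i) (F1 i) \<and> cyclic_face (M (Suc i)) (F2 i) \<and>
     cycle_iso (M i) (F1 i) (M (Suc i)) (F2 i) (gl i) \<and>
     (Suc (Suc i) < n \<longrightarrow> bverts (M (Suc i)) (F2 i) \<inter> bverts (M (Suc i)) (F1 (Suc i)) = {})"
  using gluing unfolding gluing_set_def by blast

lemma glued_faces_disjoint:
  "0 < i \<Longrightarrow> Suc i < n \<Longrightarrow> bverts (M i) (F2 (i - 1)) \<inter> bverts (M i) (F1 i) = {}"
  using gluing_at[of "i - 1"] by simp

lemma glued_Pair: "glued_to (i, h) (j, k) \<longleftrightarrow> j = Suc i \<and> j < n \<and>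
     h \<in> bdarts (M i) (F1 i) \<and> k \<in> bdarts (M j) (F2 i) \<and>
     gl i (V i h) = V j k \<and> gl i (V i (alph (M i) h)) = V j (alph (M j) k)"
  unfolding glued_def by simp

lemma gbd_Pair: "G i d \<longleftrightarrow> i < n \<and>
     ((Suc i < n \<and> d \<in> bdarts (M i) (F1 i)) \<or> (0 < i \<and> d \<in> bdarts (M i) (F2 (i - 1))))"
  unfolding gbd_def by simp

lemma hcls_Pair: "C i a = insert (i, a) {y. glued_to (i, a) y \<or> glued_to y (i, a)}"
  unfolding hcls_def by simp

lemma glued_imp_gbd:
  "glued_to (i, a) y \<Longrightarrow> G i a" "glued_to y (i, a) \<Longrightarrow> G i a"
  by (metis glued_Pair gbd_Pair surj_pair diff_Suc_1 zero_less_Suc Suc_lessD)+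

lemma hcls_not_gbd: "\<not> G i a \<Longrightarrow> C i a = {(i, a)}"
  unfolding hcls_Pair using glued_imp_gbd by auto

lemma self_in_hcls: "(i, a) \<in> C i a"
  unfolding hcls_Pair by simp

lemma hcls_inj: "C i a = C i b \<Longrightarrow> a = b"
proof -
  assume "C i a = C i b"
  then have "(i, a) \<in> C i b" using self_in_hcls by metis
  then show "a = b" unfolding hcls_Pair by (auto simp: glued_Pair)
qed

lemma hcls_eq_not_gbd: "\<not> G i a \<Longrightarrow> C j b = C i a \<Longrightarrow> j = i \<and> b = a"
proof -
  assume "\<not> G i a" "C j b = C i a"
  then have "(j, b) \<in> {(i, a)}" using self_in_hcls hcls_not_gbd by metis
  then show ?thesis by simp
qed

lemma hcls_in_halfedges: "i < n \<Longrightarrow> a \<in> D i \<Longrightarrow> C i a \<in> H"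
  unfolding composite_halfedges_def by (intro imageI) simp

lemma T_unique_cover: "X \<in> H \<Longrightarrow> \<exists>!p. p \<in> T \<and> X \<in> p"
  using smooth unfolding smooth_ts_gen_def by (elim conjE) (rule bspec)

lemma T_unique: "X \<in> H \<Longrightarrow> p \<in> T \<Longrightarrow> q \<in> T \<Longrightarrow> X \<in> p \<Longrightarrow> X \<in> q \<Longrightarrow> p = q"
  using T_unique_cover by blast

lemma T_covers: "X \<in> H \<Longrightarrow> \<exists>p\<in>T. X \<in> p"
  using T_unique_cover by blast

lemma T_pairE:
  assumes p: "p \<in> T"
  obtains j d where "j < n" "d \<in> D j" "\<not> (G j d \<and> G j (R j d))" "p = {C j d, C j (R j d)}"
proof -
  have "\<forall>p\<in>T. \<exists>X\<in>H. \<exists>Y\<in>H. composite_adj M n F1 F2 gl X Y \<and> p = {X, Y}"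
    using smooth unfolding smooth_ts_gen_def by (rule conjunct1)
  then have "\<exists>X\<in>H. \<exists>Y\<in>H. composite_adj M n F1 F2 gl X Y \<and> p = {X, Y}" using p by (rule bspec)
  then obtain X Y where XY: "composite_adj M n F1 F2 gl X Y" "p = {X, Y}"
    by (elim bexE conjE) (rule that)
  have "\<exists>j<n. \<exists>d\<in>D j. \<not> (G j d \<and> G j (R j d)) \<and> {X, Y} = {C j d, C j (R j d)}"
    using XY(1) unfolding composite_adj_def by (rule conjunct2)
  then obtain j d where "j < n" "d \<in> D j" "\<not> (G j d \<and> G j (R j d))" "{X, Y} = {C j d, C j (R j d)}"
    by (elim exE bexE conjE) (rule that)
  then show ?thesis using that XY(2) by simp
qed

lemma T_pair_through:
  assumes "p \<in> T" "X \<in> p"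
  obtains j y x where "j < n" "y \<in> D j" "x \<in> D j" "rot_adj (M j) y x" "\<not> (G j y \<and> G j x)"
    "X = C j y" "p = {C j y, C j x}"
proof -
  obtain j d where jd: "j < n" "d \<in> D j" "\<not> (G j d \<and> G j (R j d))" "p = {C j d, C j (R j d)}"
    using assms(1) by (elim T_pairE)
  interpret torus_map "M j" "face_len j" "degree j" using torus_map[OF jd(1)] .
  have adj: "rot_adj (M j) d (R j d)" using rot_neq[OF jd(2)] unfolding rot_adj_def by simp
  consider "X = C j d" | "X = C j (R j d)" using assms(2) jd(4) by blast
  then show ?thesis
  proof cases
    case 1
    from jd(1,2) rot_in[OF jd(2)] adj jd(3) 1 jd(4) show ?thesis by (rule that)
  next
    case 2
    have "rot_adj (M j) (R j d) d" using adj rot_adj_sym[of "M j"] by simp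
    moreover have "\<not> (G j (R j d) \<and> G j d)" using jd(3) by blast
    moreover have "p = {C j (R j d), C j d}" using jd(4) by (simp add: insert_commute)
    ultimately show ?thesis using jd(1,2) rot_in[OF jd(2)] 2 that by blast
  qed
qed

lemma T_partner_unique:
  assumes "i < n" "y \<in> D i" "{C i y, C i x} \<in> T" "{C i y, C i x'} \<in> T"
  shows "x = x'"
proof -
  have "{C i y, C i x} = {C i y, C i x'}"
    using T_unique[OF hcls_in_halfedges[OF assms(1,2)] assms(3,4)] by simp
  then show ?thesis using hcls_inj by (metis doubleton_eq_iff)
qed

text \<open>The class of a half-edge off the glued boundaries is a singleton, so the pair of
  \<open>T\<close> containing it comes from a rotation step inside \<open>M i\<close>.\<close>
lemma T_partner_exists:
  assumes i: "i < n" and y: "y \<in> D i" and ng: "\<not> G i y"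
  shows "\<exists>x\<in>D i. rot_adj (M i) y x \<and> {C i y, C i x} \<in> T"
proof -
  obtain p where "p \<in> T" "C i y \<in> p" using T_covers[OF hcls_in_halfedges[OF i y]] by blast
  then obtain j y' x where "x \<in> D j" "rot_adj (M j) y' x" "C i y = C j y'" "p = {C j y', C j x}"
    by (elim T_pair_through)
  moreover from hcls_eq_not_gbd[OF ng this(3)[symmetric]] have "j = i" "y' = y" by simp_all
  ultimately show ?thesis using \<open>p \<in> T\<close> by blast
qed

subsection \<open>Corners of glued faces\<close>

definition glued_face :: "nat \<Rightarrow> 'd set \<Rightarrow> bool" where
  "glued_face i f \<longleftrightarrow> (Suc i < n \<and> f = F1 i) \<or> (0 < i \<and> i < n \<and> f = F2 (i - 1))"

lemma glued_face_lt: "glued_face i f \<Longrightarrow> i < n"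
  unfolding glued_face_def by auto

lemma glued_face_cyclic: "glued_face i f \<Longrightarrow> cyclic_face (M i) f"
proof (unfold glued_face_def, elim disjE conjE)
  assume "0 < i" "f = F2 (i - 1)" "i < n"
  then show ?thesis using gluing_at[of "i - 1"] by simp
qed (use gluing_at[of i] in simp)

lemma gbd_iff_glued_face: "G i a \<longleftrightarrow> (\<exists>f. glued_face i f \<and> a \<in> bdarts (M i) f)"
proof
  assume "G i a"
  then have "(Suc i < n \<and> a \<in> bdarts (M i) (F1 i)) \<or> (0 < i \<and> i < n \<and> a \<in> bdarts (M i) (F2 (i - 1)))"
    unfolding gbd_Pair by simp
  then show "\<exists>f. glued_face i f \<and> a \<in> bdarts (M i) f"
  proof (elim disjE conjE)
    assume "Suc i < n" "a \<in> bdarts (M i) (F1 i)"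
    then show ?thesis by (intro exI[of _ "F1 i"]) (simp add: glued_face_def)
  next
    assume "0 < i" "i < n" "a \<in> bdarts (M i) (F2 (i - 1))"
    then show ?thesis by (intro exI[of _ "F2 (i - 1)"]) (simp add: glued_face_def)
  qed
next
  assume "\<exists>f. glued_face i f \<and> a \<in> bdarts (M i) f"
  then show "G i a" unfolding gbd_Pair glued_face_def by (elim exE conjE disjE) simp_all
qed

definition corner :: "nat \<Rightarrow> 'd \<Rightarrow> bool" where
  "corner i \<beta> \<longleftrightarrow> \<beta> \<in> D i \<and> (\<forall>x\<in>V i \<beta>. G i x \<longleftrightarrow> x = \<beta> \<or> x = R i \<beta>)"

lemma corner_gbd: "corner i \<beta> \<Longrightarrow> G i \<beta>"
  unfolding corner_def using self_in_vert[of \<beta> "M i"] by simp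

lemma corner_lt: "corner i \<beta> \<Longrightarrow> i < n"
  by (drule corner_gbd) (simp add: gbd_Pair)

lemma corner_facts:
  assumes "corner i \<beta>"
  shows "\<beta> \<in> D i" "R i \<beta> \<in> D i" "R i \<beta> \<noteq> \<beta>" "V i (R i \<beta>) = V i \<beta>" "G i \<beta>" "G i (R i \<beta>)"
proof -
  have i: "i < n" using corner_lt[OF assms] .
  interpret torus_map "M i" "face_len i" "degree i" using torus_map[OF i] .
  show b: "\<beta> \<in> D i" using assms unfolding corner_def by simp
  show "R i \<beta> \<in> D i" "R i \<beta> \<noteq> \<beta>" "V i (R i \<beta>) = V i \<beta>"
    using rot_in[OF b] rot_neq[OF b] vert_rot[OF b] by simp_all
  show "G i \<beta>" using corner_gbd[OF assms] .
  show "G i (R i \<beta>)"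
    using assms self_in_vert[of "R i \<beta>" "M i"] vert_rot[OF b] unfolding corner_def by simp
qed

lemma glued_faces_eq:
  assumes "glued_face i f" "glued_face i f'" "v \<in> bverts (M i) f" "v \<in> bverts (M i) f'"
  shows "f = f'"
  using assms(1,2)
proof (unfold glued_face_def, elim disjE conjE)
  assume "Suc i < n" "f = F1 i" "0 < i" "f' = F2 (i - 1)"
  then show ?thesis using glued_faces_disjoint assms(3,4) by blast
next
  assume "0 < i" "f = F2 (i - 1)" "Suc i < n" "f' = F1 i"
  then show ?thesis using glued_faces_disjoint assms(3,4) by blast
qed simp_all

lemma gbd_only_at_glued_face:
  assumes gf: "glued_face i f" and e: "e \<in> f" and x: "x \<in> V i e" and gx: "G i x"
  shows "x \<in> bdarts (M i) f"
proof -
  interpret torus_map "M i" "face_len i" "degree i" using torus_map[OF glued_face_lt[OF gf]] .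
  obtain f' where f': "glued_face i f'" "x \<in> bdarts (M i) f'" using gx gbd_iff_glued_face by blast
  have "V i x \<in> bverts (M i) f'" using vert_in_bverts[OF glued_face_cyclic[OF f'(1)] f'(2)] .
  moreover have "V i x \<in> bverts (M i) f"
    using x e vert_eq_if_mem face_subset[OF glued_face_cyclic[OF gf]] unfolding bverts_def by blast
  ultimately have "f' = f" using glued_faces_eq[OF f'(1) gf] by blast
  then show ?thesis using f'(2) by simp
qed

lemma corner_face_pred:
  assumes gf: "glued_face i f" and e: "e \<in> f"
  shows "corner i (alph (M i) (pred i e))" and "R i (alph (M i) (pred i e)) = e"
proof -
  interpret torus_map "M i" "face_len i" "degree i" using torus_map[OF glued_face_lt[OF gf]] .
  note cyc = glued_face_cyclic[OF gf]
  show rot: "R i (alph (M i) (pred i e)) = e" using rot_alph_face_pred[OF cyc e] .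
  have in_darts: "alph (M i) (pred i e) \<in> D i"
    using alph_in face_pred_in[OF cyc e] face_subset[OF cyc] by blast
  have "V i (alph (M i) (pred i e)) = V i e" using vert_alph_face_pred[OF cyc e] .
  moreover have "G i x \<longleftrightarrow> x = alph (M i) (pred i e) \<or> x = e" if x: "x \<in> V i e" for x
  proof
    assume "G i x"
    then show "x = alph (M i) (pred i e) \<or> x = e"
      using gbd_only_at_glued_face[OF gf e x] bdarts_inter_vert[OF cyc e] x by blast
  next
    assume "x = alph (M i) (pred i e) \<or> x = e"
    then have "x \<in> bdarts (M i) f" using bdarts_inter_vert[OF cyc e] by blast
    then show "G i x" using gbd_iff_glued_face gf by blast
  qed
  ultimately show "corner i (alph (M i) (pred i e))"
    unfolding corner_def using in_darts rot by simp
qed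

lemma gbd_in_corner:
  assumes "G i a"
  obtains \<beta> where "corner i \<beta>" "a = \<beta> \<or> a = R i \<beta>"
proof -
  obtain f where f: "glued_face i f" "a \<in> bdarts (M i) f" using assms gbd_iff_glued_face by blast
  interpret torus_map "M i" "face_len i" "degree i" using torus_map[OF glued_face_lt[OF f(1)]] .
  obtain e where "e \<in> f" "a = alph (M i) (pred i e) \<or> a = e"
    using bdarts_cases[OF glued_face_cyclic[OF f(1)] f(2)] by blast
  then show ?thesis using that corner_face_pred[OF f(1)] by metis
qed

lemma corner_pair_eq:
  assumes c: "corner i \<beta>" "corner i \<beta>'" and a: "a \<in> {\<beta>, R i \<beta>}" "a \<in> {\<beta>', R i \<beta>'}"
  shows "{\<beta>', R i \<beta>'} = {\<beta>, R i \<beta>}"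
proof -
  note f = corner_facts[OF c(1)] and f' = corner_facts[OF c(2)]
  have "V i \<beta>' = V i \<beta>" using a f(4) f'(4) by auto
  then have "x \<in> V i \<beta>" if "x \<in> {\<beta>', R i \<beta>'}" for x
    using that f'(4) self_in_vert by (metis insert_iff singletonD)
  then have "\<beta>' \<in> {\<beta>, R i \<beta>}" "R i \<beta>' \<in> {\<beta>, R i \<beta>}"
    using c(1) f'(5,6) unfolding corner_def by auto
  then show ?thesis using f'(3) by auto
qed

subsection \<open>Parity at a corner\<close>

definition matched_out :: "nat \<Rightarrow> 'd \<Rightarrow> bool" where
  "matched_out i y \<longleftrightarrow> (\<exists>x\<in>D i. rot_adj (M i) y x \<and> \<not> G i x \<and> {C i y, C i x} \<in> T)"

lemma matched_out_iff:
  assumes i: "i < n" and y: "y \<in> D i"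
  shows "matched_out i y \<longleftrightarrow> (\<not> G i (R i y) \<and> {C i y, C i (R i y)} \<in> T) \<or>
    (\<exists>x\<in>D i. R i x = y \<and> \<not> G i x \<and> {C i x, C i y} \<in> T)"
proof -
  interpret torus_map "M i" "face_len i" "degree i" using torus_map[OF i] .
  show ?thesis
  proof
    assume "matched_out i y"
    then obtain x where x: "x \<in> D i" "rot_adj (M i) y x" "\<not> G i x" "{C i y, C i x} \<in> T"
      unfolding matched_out_def by blast
    then have "x = R i y \<or> R i x = y" unfolding rot_adj_def by blast
    then show "(\<not> G i (R i y) \<and> {C i y, C i (R i y)} \<in> T) \<or>
        (\<exists>x\<in>D i. R i x = y \<and> \<not> G i x \<and> {C i x, C i y} \<in> T)"
      using x by (auto simp: insert_commute)
  next
    assume "(\<not> G i (R i y) \<and> {C i y, C i (R i y)} \<in> T) \<or>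
        (\<exists>x\<in>D i. R i x = y \<and> \<not> G i x \<and> {C i x, C i y} \<in> T)"
    then show "matched_out i y"
    proof (elim disjE conjE bexE)
      assume "\<not> G i (R i y)" "{C i y, C i (R i y)} \<in> T"
      then show ?thesis unfolding matched_out_def rot_adj_def using rot_in[OF y] rot_neq[OF y]
        by (intro bexI[of _ "R i y"]) auto
    next
      fix x assume "x \<in> D i" "R i x = y" "\<not> G i x" "{C i x, C i y} \<in> T"
      then show ?thesis unfolding matched_out_def rot_adj_def using rot_neq[of x]
        by (intro bexI[of _ x]) (auto simp: insert_commute)
    qed
  qed
qed

lemma interior_alternation:
  assumes i: "i < n" and y: "y \<in> D i" and ng: "\<not> G i y"
    and x1: "x1 \<in> D i" "R i x1 = y" and x2: "R i y = x2" and ne: "x1 \<noteq> x2"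
  shows "{C i x1, C i y} \<in> T \<longleftrightarrow> {C i y, C i x2} \<notin> T"
proof -
  interpret torus_map "M i" "face_len i" "degree i" using torus_map[OF i] .
  obtain x where x: "x \<in> D i" "rot_adj (M i) y x" "{C i y, C i x} \<in> T"
    using T_partner_exists[OF i y ng] by blast
  have "x = x2 \<or> x = x1" using x(1,2) x1 x2 rot_cancel unfolding rot_adj_def by blast
  moreover have "\<not> ({C i y, C i x1} \<in> T \<and> {C i y, C i x2} \<in> T)"
    using T_partner_unique[OF i y] ne by blast
  ultimately show ?thesis using x(3) by (auto simp: insert_commute)
qed

text \<open>The half-edges \<open>z 2, \<dots>, z (L - 1)\<close> around the vertex of a corner \<open>z 0, z 1\<close> are matched
  by \<open>T\<close> along the rotation, so the pairs \<open>{z j, z (j + 1)}\<close> in \<open>T\<close> alternate for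
  \<open>1 \<le> j < L\<close>; as the degree \<open>L\<close> is even, the first and the last one agree.\<close>
lemma corner_matched_out_iff:
  assumes cn: "corner i \<beta>"
  shows "matched_out i \<beta> \<longleftrightarrow> matched_out i (R i \<beta>)"
proof -
  have i: "i < n" using corner_lt[OF cn] .
  interpret torus_map "M i" "face_len i" "degree i" using torus_map[OF i] .
  define L where "L = degree i"
  define z where "z j = (R i ^^ j) \<beta>" for j
  have bd: "\<beta> \<in> D i" and gb: "\<forall>x\<in>V i \<beta>. G i x \<longleftrightarrow> x = \<beta> \<or> x = R i \<beta>"
    using cn unfolding corner_def by auto
  have zD: "z j \<in> D i" for j unfolding z_def using rot.funpow_closed[OF bd] .
  have zS: "R i (z j) = z (Suc j)" for j unfolding z_def by simp
  have z0: "z 0 = \<beta>" and z1: "z 1 = R i \<beta>" and zL: "z L = \<beta>"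
    unfolding z_def L_def using funpow_rot_l[OF bd] by simp_all
  have L: "even L" "2 \<le> L" unfolding L_def using even_l two_le_l by auto
  have z_eq: "z a = z b \<longleftrightarrow> a = b" if "a < L" "b < L" for a b
    using inj_on_funpow_rot[OF bd] that unfolding z_def L_def by (auto dest: inj_onD)
  have G_z: "G i (z j) \<longleftrightarrow> j = 0 \<or> j = 1" if j: "j < L" for j
  proof -
    have "z j \<in> V i \<beta>" unfolding z_def by (rule funpow_rot_in_vert)
    then have "G i (z j) \<longleftrightarrow> z j = z 0 \<or> z j = z 1" using gb z0 z1 by simp
    then show ?thesis using z_eq[OF j, of 0] z_eq[OF j, of 1] L by simp
  qed
  define mf where "mf j \<longleftrightarrow> {C i (z j), C i (z (Suc j))} \<in> T" for j
  have alt: "mf (Suc j) \<longleftrightarrow> \<not> mf j" if j: "0 < j" "Suc (Suc j) \<le> L" for j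
  proof -
    have "z j \<noteq> z (Suc (Suc j))"
    proof (cases "Suc (Suc j) = L")
      case True
      then show ?thesis using zL z0 z_eq[of j 0] j by simp
    qed (use z_eq[of j "Suc (Suc j)"] j in simp)
    moreover have "\<not> G i (z (Suc j))" using G_z j by simp
    ultimately show ?thesis
      using interior_alternation[OF i zD, of "Suc j" "z j" "z (Suc (Suc j))"] zD zS
      unfolding mf_def by blast
  qed
  have last_first: "mf (L - 1) \<longleftrightarrow> mf 1"
  proof -
    have "mf (Suc j) \<longleftrightarrow> \<not> mf (Suc (j - 1))" if "0 < j" "j < L - 1" for j
      using alt[of j] that by simp
    then have "mf (Suc (L - 2)) \<longleftrightarrow> (even (L - 2) \<longleftrightarrow> mf 1)"
      using alternating_iff[of "L - 1" "\<lambda>j. mf (Suc j)" "L - 2"] L by simp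
    moreover have "Suc (L - 2) = L - 1" using L by simp
    ultimately show ?thesis using L by simp
  qed
  have zLm: "R i (z (L - 1)) = \<beta>" using zS[of "L - 1"] zL L by simp
  have "matched_out i \<beta> \<longleftrightarrow> \<not> G i (z (L - 1)) \<and> mf (L - 1)"
  proof -
    have "x = z (L - 1)" if "x \<in> D i" "R i x = \<beta>" for x
      using rot_cancel[OF that(1) zD[of "L - 1"]] that(2) zLm by simp
    then have "(\<exists>x\<in>D i. R i x = \<beta> \<and> \<not> G i x \<and> {C i x, C i \<beta>} \<in> T) \<longleftrightarrow>
        \<not> G i (z (L - 1)) \<and> {C i (z (L - 1)), C i \<beta>} \<in> T"
      using zD zLm by blast
    moreover have "G i (R i \<beta>)" using G_z[of 1] z1 L by simp
    moreover have "z (Suc (L - 1)) = \<beta>" using zL L by simp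
    ultimately show ?thesis unfolding matched_out_iff[OF i bd] mf_def by simp
  qed
  moreover have "matched_out i (R i \<beta>) \<longleftrightarrow> \<not> G i (z 2) \<and> mf 1"
  proof -
    have "x = \<beta>" if "x \<in> D i" "R i x = R i \<beta>" for x using rot_cancel[OF that(1) bd] that(2) .
    moreover have "G i \<beta>" using G_z[of 0] z0 L by simp
    moreover have "R i (R i \<beta>) = z 2" using zS[of 1] z1 by (simp add: numeral_2_eq_2)
    ultimately show ?thesis
      unfolding matched_out_iff[OF i zD[of 1], unfolded z1] mf_def using z1
      by (auto simp: numeral_2_eq_2)
  qed
  moreover have "G i (z (L - 1)) \<longleftrightarrow> G i (z 2)"
  proof (cases "L = 2")
    case True
    then show ?thesis using G_z[of 1] zL z0 G_z[of 0] by simp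
  next
    case False
    then have "2 < L" "2 \<le> L - 1" using L by auto
    then show ?thesis using G_z[of "L - 1"] G_z[of 2] by simp
  qed
  ultimately show ?thesis using last_first by blast
qed

lemma matched_out_at_corner:
  "corner i \<beta> \<Longrightarrow> a \<in> {\<beta>, R i \<beta>} \<Longrightarrow> matched_out i a \<longleftrightarrow> matched_out i \<beta>"
  using corner_matched_out_iff by auto

subsection \<open>Glued half-edges\<close>

lemma glued_partner_exists:
  assumes i: "Suc i < n" and b: "\<beta> \<in> bdarts (M i) (F1 i)"
  obtains \<gamma> where "glued_to (i, \<beta>) (Suc i, \<gamma>)"
proof -
  interpret M1: torus_map "M i" "face_len i" "degree i" using torus_map i by simp
  interpret M2: torus_map "M (Suc i)" "face_len (Suc i)" "degree (Suc i)" using torus_map[OF i] .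
  have c1: "cyclic_face (M i) (F1 i)" and c2: "cyclic_face (M (Suc i)) (F2 i)" and
    edge: "\<forall>d\<in>F1 i. \<exists>d'\<in>F2 i. {gl i (V i d), gl i (V i (alph (M i) d))} =
                       {V (Suc i) d', V (Suc i) (alph (M (Suc i)) d')}"
    using gluing_at[OF i] unfolding cycle_iso_def by auto
  obtain d where d: "d \<in> F1 i" "{V i \<beta>, V i (alph (M i) \<beta>)} = {V i d, V i (alph (M i) d)}"
  proof (cases "\<beta> \<in> F1 i")
    case False
    then obtain d where "d \<in> F1 i" "\<beta> = alph (M i) d" using b unfolding bdarts_def by auto
    moreover have "d \<in> D i" using calculation(1) M1.face_subset[OF c1] by blast
    ultimately show ?thesis using that[of d] by (simp add: insert_commute)
  qed (use that in blast)
  obtain d' where d'_F2: "d' \<in> F2 i" and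
    d'_eq: "{gl i (V i d), gl i (V i (alph (M i) d))} = {V (Suc i) d', V (Suc i) (alph (M (Suc i)) d')}"
    using edge d(1) by blast
  have "{gl i (V i \<beta>), gl i (V i (alph (M i) \<beta>))} = {gl i (V i d), gl i (V i (alph (M i) d))}"
    using arg_cong[OF d(2), of "image (gl i)"] by simp
  with d'_F2 d'_eq have d': "d' \<in> F2 i"
    "{gl i (V i \<beta>), gl i (V i (alph (M i) \<beta>))} = {V (Suc i) d', V (Suc i) (alph (M (Suc i)) d')}"
    by simp_all
  have d'_bd: "d' \<in> bdarts (M (Suc i)) (F2 i)" "alph (M (Suc i)) d' \<in> bdarts (M (Suc i)) (F2 i)"
    using d'(1) unfolding bdarts_def by simp_all
  have alph2: "alph (M (Suc i)) (alph (M (Suc i)) d') = d'"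
    using d'(1) M2.face_subset[OF c2] by auto
  consider "gl i (V i \<beta>) = V (Suc i) d'" "gl i (V i (alph (M i) \<beta>)) = V (Suc i) (alph (M (Suc i)) d')"
    | "gl i (V i \<beta>) = V (Suc i) (alph (M (Suc i)) d')" "gl i (V i (alph (M i) \<beta>)) = V (Suc i) d'"
    using d'(2) by (auto simp: doubleton_eq_iff)
  then show ?thesis
  proof cases
    case 1
    then show ?thesis using that[of d'] d'_bd(1) b i by (simp add: glued_Pair)
  next
    case 2
    then show ?thesis using that[of "alph (M (Suc i)) d'"] d'_bd(2) b i alph2 by (simp add: glued_Pair)
  qed
qed

lemma glued_in_darts:
  assumes "glued_to (i, \<beta>) (Suc i, \<gamma>)"
  shows "Suc i < n" "\<beta> \<in> D i" "\<gamma> \<in> D (Suc i)"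
proof -
  show i: "Suc i < n" using assms by (simp add: glued_Pair)
  have "\<beta> \<in> bdarts (M i) (F1 i)" "\<gamma> \<in> bdarts (M (Suc i)) (F2 i)"
    using assms by (simp_all add: glued_Pair)
  then show "\<beta> \<in> D i" "\<gamma> \<in> D (Suc i)"
    using torus_map.bdarts_subset[OF torus_map] gluing_at[OF i] i by (meson Suc_lessD subsetD)+
qed

lemma glued_target_unique:
  assumes "glued_to (i, \<beta>) (j, \<gamma>)" "glued_to (i, \<beta>) (j, \<gamma>')"
  shows "\<gamma> = \<gamma>'"
proof -
  have j: "j = Suc i" "Suc i < n" using assms(1) by (simp_all add: glued_Pair)
  interpret M2: torus_map "M (Suc i)" "face_len (Suc i)" "degree (Suc i)" using torus_map[OF j(2)] .
  have "cyclic_face (M (Suc i)) (F2 i)" using gluing_at[OF j(2)] by simp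
  from M2.bdarts_eqI[OF this] show ?thesis using assms unfolding j(1) glued_Pair by simp
qed

lemma glued_source_unique:
  assumes "glued_to (i, \<beta>) (j, \<gamma>)" "glued_to (i', \<beta>') (j, \<gamma>)"
  shows "i = i' \<and> \<beta> = \<beta>'"
proof -
  have i: "i' = i" "Suc i < n" "j = Suc i" using assms by (simp_all add: glued_Pair)
  interpret M1: torus_map "M i" "face_len i" "degree i" using torus_map i by simp
  have c1: "cyclic_face (M i) (F1 i)" and
    inj: "inj_on (gl i) (bverts (M i) (F1 i))"
    using gluing_at[OF i(2)] unfolding cycle_iso_def bij_betw_def by auto
  have b: "\<beta> \<in> bdarts (M i) (F1 i)" "\<beta>' \<in> bdarts (M i) (F1 i)"
    using assms i(1) by (simp_all add: glued_Pair)
  have "gl i (V i \<beta>) = gl i (V i \<beta>')" "gl i (V i (alph (M i) \<beta>)) = gl i (V i (alph (M i) \<beta>'))"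
    using assms i(1) by (simp_all add: glued_Pair)
  then have "V i \<beta> = V i \<beta>'" "V i (alph (M i) \<beta>) = V i (alph (M i) \<beta>')"
    using inj_onD[OF inj] M1.vert_in_bverts[OF c1] M1.bdarts_alph[OF c1] b by metis+
  then show ?thesis using M1.bdarts_eqI[OF c1 b] i(1) by simp
qed

text \<open>No half-edge is glued on both sides, since the two glued faces of a grid share no vertex.\<close>
lemma not_glued_chain: "glued_to x y \<Longrightarrow> \<not> glued_to y z"
proof
  assume xy: "glued_to x y" and yz: "glued_to y z"
  obtain i a j b k c where xyz: "x = (i, a)" "y = (j, b)" "z = (k, c)" by (metis surj_pair)
  have j: "j = Suc i" "Suc (Suc i) < n" and
    b: "b \<in> bdarts (M j) (F2 i)" "b \<in> bdarts (M j) (F1 j)"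
    using xy yz unfolding xyz glued_Pair by auto
  interpret torus_map "M j" "face_len j" "degree j" using torus_map j by simp
  have "V j b \<in> bverts (M j) (F2 i)" "V j b \<in> bverts (M j) (F1 j)"
    using vert_in_bverts gluing_at j b by (metis Suc_lessD)+
  then show False using gluing_at[of i] j by auto
qed

lemma hcls_glued:
  assumes g: "glued_to (i, \<beta>) (Suc i, \<gamma>)"
  shows "C i \<beta> = {(i, \<beta>), (Suc i, \<gamma>)}" and "C (Suc i) \<gamma> = {(i, \<beta>), (Suc i, \<gamma>)}"
proof -
  have "y = (Suc i, \<gamma>)" if "glued_to (i, \<beta>) y" for y
    using that glued_target_unique[OF g] by (cases y) (metis glued_Pair)
  moreover have "\<not> glued_to y (i, \<beta>)" for y using not_glued_chain g by blast
  ultimately show "C i \<beta> = {(i, \<beta>), (Suc i, \<gamma>)}" using g unfolding hcls_Pair by blast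
  have "y = (i, \<beta>)" if "glued_to y (Suc i, \<gamma>)" for y
    using that glued_source_unique[OF g] by (cases y) blast
  moreover have "\<not> glued_to (Suc i, \<gamma>) y" for y using not_glued_chain g by blast
  ultimately show "C (Suc i) \<gamma> = {(i, \<beta>), (Suc i, \<gamma>)}" using g unfolding hcls_Pair by blast
qed

subsection \<open>The induced transition systems\<close>

definition kept_pairs :: "nat \<Rightarrow> 'd set set" where
  "kept_pairs i = {{a, b} | a b. a \<in> D i \<and> b \<in> D i \<and> rot_adj (M i) a b \<and>
     \<not> (G i a \<and> G i b) \<and> {C i a, C i b} \<in> T}"

definition corner_pairs :: "nat \<Rightarrow> 'd set set" where
  "corner_pairs i = {{\<beta>, R i \<beta>} | \<beta>. corner i \<beta> \<and> \<not> matched_out i \<beta>}"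

definition induced_ts :: "nat \<Rightarrow> 'd set set" where
  "induced_ts i = kept_pairs i \<union> corner_pairs i"

lemma kept_pairsE:
  assumes "p \<in> kept_pairs i" "a \<in> p"
  obtains b where "p = {a, b}" "a \<in> D i" "b \<in> D i" "rot_adj (M i) a b" "\<not> (G i a \<and> G i b)"
    "{C i a, C i b} \<in> T"
proof -
  obtain x y where xy: "p = {x, y}" "x \<in> D i" "y \<in> D i" "rot_adj (M i) x y"
    "\<not> (G i x \<and> G i y)" "{C i x, C i y} \<in> T"
    using assms(1) unfolding kept_pairs_def by blast
  show ?thesis
  proof (cases "a = x")
    case True then show ?thesis using xy that by blast
  next
    case False
    then have "a = y" using assms(2) xy(1) by simp
    then show ?thesis using xy that[of x] rot_adj_sym[of "M i" x y] by (auto simp: insert_commute)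
  qed
qed

lemma kept_pairs_unique:
  assumes i: "i < n" and p: "p \<in> kept_pairs i" "a \<in> p" and q: "q \<in> kept_pairs i" "a \<in> q"
  shows "p = q"
proof -
  obtain b where b: "p = {a, b}" "a \<in> D i" "{C i a, C i b} \<in> T" using kept_pairsE[OF p] by metis
  obtain b' where b': "q = {a, b'}" "{C i a, C i b'} \<in> T" using kept_pairsE[OF q] by metis
  show ?thesis using T_partner_unique[OF i b(2,3) b'(2)] b b' by simp
qed

lemma kept_pairs_not_gbd: "p \<in> kept_pairs i \<Longrightarrow> \<exists>a\<in>p. \<not> G i a"
  unfolding kept_pairs_def by auto

lemma kept_pair_matched_out: "p \<in> kept_pairs i \<Longrightarrow> a \<in> p \<Longrightarrow> G i a \<Longrightarrow> matched_out i a"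
  unfolding matched_out_def by (elim kept_pairsE) (simp, blast)

lemma corner_pairsE:
  assumes "p \<in> corner_pairs i"
  obtains \<beta> where "p = {\<beta>, R i \<beta>}" "corner i \<beta>" "\<not> matched_out i \<beta>"
  using assms unfolding corner_pairs_def by blast

lemma corner_pairs_gbd: "p \<in> corner_pairs i \<Longrightarrow> a \<in> p \<Longrightarrow> G i a"
  by (elim corner_pairsE) (use corner_facts in blast)

lemma corner_pairs_unique:
  assumes "p \<in> corner_pairs i" "a \<in> p" "q \<in> corner_pairs i" "a \<in> q"
  shows "p = q"
  using assms by (elim corner_pairsE) (metis corner_pair_eq)

lemma corner_pair_not_matched_out:
  "p \<in> corner_pairs i \<Longrightarrow> a \<in> p \<Longrightarrow> \<not> matched_out i a"
  by (elim corner_pairsE) (use matched_out_at_corner in blast)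

lemma induced_ts_covers_unique:
  assumes i: "i < n" and a: "a \<in> D i"
  shows "\<exists>!p. p \<in> induced_ts i \<and> a \<in> p"
proof (cases "G i a \<and> \<not> matched_out i a")
  case True
  then obtain \<beta> where \<beta>: "corner i \<beta>" "a \<in> {\<beta>, R i \<beta>}" by (metis gbd_in_corner insertI1 insertI2)
  then have "{\<beta>, R i \<beta>} \<in> corner_pairs i"
    using True matched_out_at_corner unfolding corner_pairs_def by blast
  moreover have "p \<notin> kept_pairs i" if "a \<in> p" for p using kept_pair_matched_out that True by blast
  ultimately show ?thesis using \<beta>(2) corner_pairs_unique unfolding induced_ts_def by blast
next
  case False
  have "\<exists>p\<in>kept_pairs i. a \<in> p"
  proof (cases "G i a")
    case True
    then obtain x where "x \<in> D i" "rot_adj (M i) a x" "\<not> G i x" "{C i a, C i x} \<in> T"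
      using False unfolding matched_out_def by blast
    then show ?thesis using a unfolding kept_pairs_def by blast
  next
    case False
    then obtain x where "x \<in> D i" "rot_adj (M i) a x" "{C i a, C i x} \<in> T"
      using T_partner_exists[OF i a] by blast
    then show ?thesis using a False unfolding kept_pairs_def by blast
  qed
  moreover have "p \<notin> corner_pairs i" if "a \<in> p" for p
    using False corner_pairs_gbd corner_pair_not_matched_out that by blast
  ultimately show ?thesis using kept_pairs_unique[OF i] unfolding induced_ts_def by blast
qed

lemma smooth_induced_ts: "i < n \<Longrightarrow> smooth_ts (M i) (induced_ts i)"
  unfolding smooth_ts_def smooth_ts_gen_def
proof (intro conjI ballI)
  fix p assume "p \<in> induced_ts i"
  then consider "p \<in> kept_pairs i" | "p \<in> corner_pairs i" unfolding induced_ts_def by blast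
  then show "\<exists>a\<in>D i. \<exists>b\<in>D i. rot_adj (M i) a b \<and> p = {a, b}"
  proof cases
    case 1 then show ?thesis unfolding kept_pairs_def by blast
  next
    case 2
    then obtain \<beta> where "p = {\<beta>, R i \<beta>}" "corner i \<beta>" by (elim corner_pairsE)
    then show ?thesis using corner_facts[of i \<beta>] unfolding rot_adj_def by auto
  qed
qed (rule induced_ts_covers_unique)

lemma ftrans_induced_ts_iff:
  assumes gf: "glued_face i f" and x: "x \<in> bdarts (M i) f"
  shows "ftrans (M i) f (induced_ts i) (V i x) \<longleftrightarrow> \<not> matched_out i x"
proof -
  interpret torus_map "M i" "face_len i" "degree i" using torus_map[OF glued_face_lt[OF gf]] .
  note cyc = glued_face_cyclic[OF gf]
  obtain e where e: "e \<in> f" "x = alph (M i) (pred i e) \<or> x = e" using bdarts_cases[OF cyc x] by blast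
  define \<beta> where "\<beta> = alph (M i) (pred i e)"
  have cn: "corner i \<beta>" and R\<beta>: "R i \<beta> = e" using corner_face_pred[OF gf e(1)] unfolding \<beta>_def by auto
  have x\<beta>: "x \<in> {\<beta>, R i \<beta>}" using e(2) R\<beta> unfolding \<beta>_def by auto
  have "V i x = V i e" using vert_alph_face_pred[OF cyc e(1)] e(2) by auto
  then have "bdarts (M i) f \<inter> V i x = {\<beta>, R i \<beta>}"
    using bdarts_inter_vert[OF cyc e(1)] R\<beta> unfolding \<beta>_def by simp
  moreover have "{\<beta>, R i \<beta>} \<notin> kept_pairs i"
    using corner_facts(5,6)[OF cn] kept_pairs_not_gbd by blast
  moreover have "{\<beta>, R i \<beta>} \<in> corner_pairs i \<longleftrightarrow> \<not> matched_out i \<beta>"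
  proof
    show "{\<beta>, R i \<beta>} \<in> corner_pairs i \<Longrightarrow> \<not> matched_out i \<beta>"
      using corner_pair_not_matched_out by blast
    show "\<not> matched_out i \<beta> \<Longrightarrow> {\<beta>, R i \<beta>} \<in> corner_pairs i"
      using cn unfolding corner_pairs_def by blast
  qed
  ultimately show ?thesis
    unfolding ftrans_def induced_ts_def using matched_out_at_corner[OF cn x\<beta>] by simp
qed

lemma glued_matched_out_iff:
  assumes g: "glued_to (i, \<beta>) (Suc i, \<gamma>)"
  shows "matched_out i \<beta> \<longleftrightarrow> \<not> matched_out (Suc i) \<gamma>"
proof
  assume "matched_out i \<beta>"
  then obtain x where x: "\<not> G i x" "{C i \<beta>, C i x} \<in> T" unfolding matched_out_def by blast
  show "\<not> matched_out (Suc i) \<gamma>"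
  proof
    assume "matched_out (Suc i) \<gamma>"
    then obtain x' where "{C (Suc i) \<gamma>, C (Suc i) x'} \<in> T" unfolding matched_out_def by blast
    then have x': "{C i \<beta>, C (Suc i) x'} \<in> T" using hcls_glued[OF g] by simp
    have "C i \<beta> \<in> H" using hcls_in_halfedges glued_in_darts[OF g] by simp
    from T_unique[OF this x(2) x' insertI1 insertI1]
    have "C (Suc i) x' = C i x" by (metis doubleton_eq_iff)
    from hcls_eq_not_gbd[OF x(1) this] show False by simp
  qed
next
  assume nm2: "\<not> matched_out (Suc i) \<gamma>"
  have "C i \<beta> \<in> H" using hcls_in_halfedges glued_in_darts[OF g] by simp
  then obtain p where p: "p \<in> T" "C i \<beta> \<in> p" using T_covers by blast
  then obtain j y x where jyx: "y \<in> D j" "x \<in> D j" "rot_adj (M j) y x" "\<not> (G j y \<and> G j x)"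
    "C i \<beta> = C j y" "p = {C j y, C j x}" by (elim T_pair_through)
  have "G j y"
  proof (rule ccontr)
    assume "\<not> G j y"
    then have "{(j, y)} = {(i, \<beta>), (Suc i, \<gamma>)}" using hcls_not_gbd jyx(5) hcls_glued(1)[OF g] by simp
    then show False by (auto simp: doubleton_eq_iff)
  qed
  then have witness: "\<not> G j x" "{C j y, C j x} \<in> T" using jyx(4,6) p(1) by auto
  have "(j, y) \<in> {(i, \<beta>), (Suc i, \<gamma>)}" using self_in_hcls[of j y] jyx(5) hcls_glued(1)[OF g] by simp
  then consider "j = i" "y = \<beta>" | "j = Suc i" "y = \<gamma>" by blast
  then show "matched_out i \<beta>"
  proof cases
    case 1
    then show ?thesis using witness jyx(2,3) unfolding matched_out_def by blast
  next
    case 2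
    then have "matched_out (Suc i) \<gamma>" using witness jyx(2,3) unfolding matched_out_def by blast
    then show ?thesis using nm2 by simp
  qed
qed

lemma compatible_induced_ts: "compatible M n F1 F2 gl induced_ts"
  unfolding compatible_def
proof (intro allI impI ballI)
  fix i v assume i: "Suc i < n" and v: "v \<in> bverts (M i) (F1 i)"
  obtain e where e: "e \<in> F1 i" "v = V i e" using v unfolding bverts_def by auto
  have gf: "glued_face i (F1 i)" "glued_face (Suc i) (F2 i)" unfolding glued_face_def using i by auto
  have eb: "e \<in> bdarts (M i) (F1 i)" using e(1) unfolding bdarts_def by simp
  obtain \<gamma> where g: "glued_to (i, e) (Suc i, \<gamma>)" using glued_partner_exists[OF i eb] by blast
  then have "\<gamma> \<in> bdarts (M (Suc i)) (F2 i)" "gl i v = V (Suc i) \<gamma>" using e(2) by (simp_all add: glued_Pair)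
  then show "ftrans (M i) (F1 i) (induced_ts i) v \<longleftrightarrow>
      \<not> ftrans (M (Suc i)) (F2 i) (induced_ts (Suc i)) (gl i v)"
    using ftrans_induced_ts_iff[OF gf(1) eb] ftrans_induced_ts_iff[OF gf(2)] glued_matched_out_iff[OF g]
      e(2) by simp
qed

lemma T_subset_csum: "T \<subseteq> csum M n F1 F2 gl induced_ts"
proof
  fix p assume p: "p \<in> T"
  then obtain j d where jd: "j < n" "d \<in> D j" "\<not> (G j d \<and> G j (R j d))" "p = {C j d, C j (R j d)}"
    by (elim T_pairE)
  interpret torus_map "M j" "face_len j" "degree j" using torus_map[OF jd(1)] .
  have "{d, R j d} \<in> kept_pairs j"
    unfolding kept_pairs_def rot_adj_def using jd rot_in[OF jd(2)] rot_neq[OF jd(2)] p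
    by (intro CollectI exI[of _ d] exI[of _ "R j d"]) auto
  then have ts: "{d, R j d} \<in> induced_ts j" "{R j d, d} \<in> induced_ts j"
    unfolding induced_ts_def by (simp_all add: insert_commute)
  consider "\<not> G j d" "\<not> G j (R j d)" | "G j d" "\<not> G j (R j d)" | "G j (R j d)" "\<not> G j d"
    using jd(3) by blast
  then show "p \<in> csum M n F1 F2 gl induced_ts"
  proof cases
    case 1
    then show ?thesis unfolding csum_def using jd(1,4) ts(1)
      by (intro UnI1 CollectI exI[of _ j] exI[of _ "{d, R j d}"]) auto
  next
    case 2
    then show ?thesis unfolding csum_def using jd(1,4) ts(1)
      by (intro UnI2 CollectI exI[of _ j] exI[of _ d] exI[of _ "R j d"]) (auto simp: insert_commute)
  next
    case 3
    then show ?thesis unfolding csum_def using jd(1,4) ts(2)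
      by (intro UnI2 CollectI exI[of _ j] exI[of _ "R j d"] exI[of _ d]) auto
  qed
qed

lemma csum_subset_T: "csum M n F1 F2 gl induced_ts \<subseteq> T"
proof
  fix q assume "q \<in> csum M n F1 F2 gl induced_ts"
  then consider (interior) i p where "q = hcls M n F1 F2 gl ` Pair i ` p" "p \<in> induced_ts i"
      "\<forall>x\<in>p. \<not> G i x"
    | (boundary) i h s where "q = {C i s, C i h}" "{h, s} \<in> induced_ts i" "G i h" "\<not> G i s"
    unfolding csum_def by (elim UnE CollectE exE conjE) blast+
  then show "q \<in> T"
  proof cases
    case interior
    have "p \<notin> corner_pairs i"
    proof
      assume "p \<in> corner_pairs i"
      moreover from this obtain \<beta> where "p = {\<beta>, R i \<beta>}" by (elim corner_pairsE)
      ultimately show False using corner_pairs_gbd interior(3) by blast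
    qed
    then have "p \<in> kept_pairs i" using interior(2) unfolding induced_ts_def by blast
    then obtain a b where "p = {a, b}" "{C i a, C i b} \<in> T" unfolding kept_pairs_def by blast
    then show ?thesis using interior(1) by simp
  next
    case boundary
    then have "{h, s} \<in> kept_pairs i"
      unfolding induced_ts_def using corner_pairs_gbd[of "{h, s}" i s] by blast
    then obtain y where "{h, s} = {h, y}" "{C i h, C i y} \<in> T" by (elim kept_pairsE) blast
    then have "y = s" by (metis doubleton_eq_iff)
    then show ?thesis using \<open>{C i h, C i y} \<in> T\<close> boundary(1) by (simp add: insert_commute)
  qed
qed

end

theorem mainTheorem10:
  fixes M :: "nat \<Rightarrow> 'd cmap" and n :: nat
    and F1 F2 :: "nat \<Rightarrow> 'd set" and gl :: "nat \<Rightarrow> 'd set \<Rightarrow> 'd set"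
    and T :: "(nat \<times> 'd) set set set"
  assumes "\<forall>i<n. \<exists>k l. torus_grid (M i) k l"
    and "gluing_set M n F1 F2 gl"
    and "smooth_ts_gen (composite_halfedges M n F1 F2 gl) (composite_adj M n F1 F2 gl) T"
  shows "\<exists>TT. (\<forall>i<n. smooth_ts (M i) (TT i)) \<and> compatible M n F1 F2 gl TT \<and>
             T = csum M n F1 F2 gl TT"
proof -
  interpret composite_ts M n F1 F2 gl T using assms by unfold_locales
  show ?thesis
    using smooth_induced_ts compatible_induced_ts T_subset_csum csum_subset_T by blast
qed

end
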